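(* Let $d\geq 2$ be an integer, let $\mathbf{k}=(k^1,\dots,k^d)\in\mathbb{R}^d$ with $\mathbf{k}\neq 0$, and write $k_i=k^i$, $k^2=\delta_{ij}k^ik^j$ (repeated indices summed over $1,\dots,d$). Let $\varphi_{ij}(z)$, $i,j=1,\dots,d$, be twice differentiable complex-valued functions of $z\in(0,\infty)$ with $\varphi_{ij}=\varphi_{ji}$, and set $\varphi_0=\delta^{ij}\varphi_{ij}$. Define the differential operator $$\hat E_s=\partial_z^2+\frac{5-d}{z}\partial_z+\frac{4-2d}{z^2}-k^2,$$ and suppose that for all $i,j$ $$\hat E_s\varphi_{ij}= -k_jk^m\varphi_{im}-k_ik^m\varphi_{mj}+k_ik_j\varphi_0 .$$ Define $$\bar\varphi_{ij}=\varphi_{ij}-\frac{k_ik^m}{k^2}\varphi_{mj}-\frac{k_jk^m}{k^2}\varphi_{mi}+\frac{k_ik_jk^mk^n}{k^4}\varphi_{mn}-\frac{1}{d-1}\Big(\delta_{ij}-\frac{k_ik_j}{k^2}\Big)\Big(\varphi_0-\frac{k^mk^n}{k^2}\varphi_{mn}\Big).$$ Then $\bar\varphi_{ij}$ is traceless and transverse, i.e. $\delta^{ij}\bar\varphi_{ij}=0$ and $k^i\bar\varphi_{ij}=0$, and it satisfies the homogeneous equation $\hat E_s\bar\varphi_{ij}(z)=0$ for all $i,j$.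
   Context: This is the momentum-space (Fourier transformed in the boundary coordinates $x^i$, with $\partial_m\to ik_m$) form of the equation for the symmetric component $\varphi_{ij}$ of a hook-type gauge field in Euclidean $AdS_{d+1}$ in Poincaré coordinates, $z$ being the radial coordinate; indices are raised and lowered with the Euclidean metric $\delta_{ij}$, and $\mathbf{k}$ is held fixed. *)

theory Defs
  imports "HOL-Analysis.Analysis"
begin

text \<open>Index set {1..d} is modelled by a finite type 'n with d = CARD('n);
  momenta k are vectors in real^'n. Fields are complex-valued functions of z.\<close>

definition ksq :: "real ^ 'n \<Rightarrow> real" where
  "ksq k = (\<Sum>i\<in>UNIV. k $ i * k $ i)"

definition dz :: "(real \<Rightarrow> complex) \<Rightarrow> real \<Rightarrow> complex" where
  "dz f z = vector_derivative f (at z)"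

definition Es :: "real ^ 'n \<Rightarrow> (real \<Rightarrow> complex) \<Rightarrow> real \<Rightarrow> complex" where
  "Es k f z = dz (dz f) z
      + complex_of_real ((5 - real CARD('n)) / z) * dz f z
      + complex_of_real ((4 - 2 * real CARD('n)) / z ^ 2) * f z
      - complex_of_real (ksq k) * f z"

definition trace0 :: "('n \<Rightarrow> 'n \<Rightarrow> real \<Rightarrow> complex) \<Rightarrow> real \<Rightarrow> complex" where
  "trace0 \<phi> z = (\<Sum>i\<in>UNIV. \<phi> i i z)"

definition phibar :: "real ^ 'n \<Rightarrow> ('n \<Rightarrow> 'n \<Rightarrow> real \<Rightarrow> complex) \<Rightarrow> 'n \<Rightarrow> 'n \<Rightarrow> real \<Rightarrow> complex" where
  "phibar k \<phi> i j z =
     \<phi> i j z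
     - (\<Sum>m\<in>UNIV. complex_of_real (k $ i * k $ m / ksq k) * \<phi> m j z)
     - (\<Sum>m\<in>UNIV. complex_of_real (k $ j * k $ m / ksq k) * \<phi> m i z)
     + (\<Sum>m\<in>UNIV. \<Sum>n\<in>UNIV. complex_of_real (k $ i * k $ j * k $ m * k $ n / (ksq k) ^ 2) * \<phi> m n z)
     - complex_of_real (1 / (real CARD('n) - 1)) *
         complex_of_real ((if i = j then 1 else 0) - k $ i * k $ j / ksq k) *
         (trace0 \<phi> z - (\<Sum>m\<in>UNIV. \<Sum>n\<in>UNIV. complex_of_real (k $ m * k $ n / ksq k) * \<phi> m n z))"

end

theory Submission
  imports Defs
begin

text \<open>The tensor \<open>phibar k \<phi>\<close> at a point \<open>z\<close> is a linear combination of the values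
  \<open>\<phi> m n z\<close> with \<open>z\<close>-independent coefficients, so it commutes with the operator \<open>Es k\<close>.
  By the symmetry of \<open>\<phi>\<close>, the right-hand side of the field equation is of pure gauge form
  \<open>k\<^sub>i v\<^sub>j + v\<^sub>i k\<^sub>j\<close> with \<open>v\<^sub>j = k\<^sub>j \<phi>\<^sub>0 / 2 - k\<^sup>m \<phi>\<^sub>m\<^sub>j\<close>, and \<open>phibar k\<close> annihilates
  every such tensor. Tracelessness and transversality are algebraic identities that only
  use \<open>k\<^sup>2 \<noteq> 0\<close> and \<open>d \<noteq> 1\<close>.\<close>

definition twice_differentiable_on :: "real set \<Rightarrow> (real \<Rightarrow> complex) \<Rightarrow> bool" where
  "twice_differentiable_on S f \<longleftrightarrow> (\<forall>z\<in>S. f differentiable (at z) \<and> dz f differentiable (at z))"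

lemma dz_cong_open:
  assumes "open S" "z \<in> S" "\<And>x. x \<in> S \<Longrightarrow> f x = g x"
  shows "dz f z = dz g z"
  unfolding dz_def
proof (rule vector_derivative_cong_eq)
  show "eventually (\<lambda>x. x \<in> UNIV \<longrightarrow> f x = g x) (nhds z)"
    using eventually_nhds_in_open[OF assms(1,2)] by eventually_elim (use assms(3) in auto)
qed auto

lemma differentiable_cong_open:
  fixes f g :: "real \<Rightarrow> complex"
  assumes "f differentiable (at z)" "open S" "z \<in> S" "\<And>x. x \<in> S \<Longrightarrow> f x = g x"
  shows "g differentiable (at z)"
proof -
  have "(f has_vector_derivative dz f z) (at z)"
    using assms(1) unfolding dz_def by (rule vector_derivative_works[THEN iffD1])
  then have "(g has_vector_derivative dz f z) (at z)"
    by (rule has_vector_derivative_transform_within_open[of _ _ _ S]) (use assms in auto)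
  then show ?thesis by (rule differentiableI_vector)
qed

lemma dz_lincomb:
  fixes f g :: "real \<Rightarrow> complex"
  assumes "f differentiable (at x)" "g differentiable (at x)"
  shows "dz (\<lambda>x. a * f x + b * g x) x = a * dz f x + b * dz g x"
  using assms by (simp add: dz_def)

lemma twice_differentiable_on_lincomb:
  assumes S: "open S" and f: "twice_differentiable_on S f" and g: "twice_differentiable_on S g"
  shows "twice_differentiable_on S (\<lambda>x. a * f x + b * g x)"
  unfolding twice_differentiable_on_def
proof (intro ballI conjI)
  fix z assume z: "z \<in> S"
  with f g show "(\<lambda>x. a * f x + b * g x) differentiable (at z)"
    by (simp add: twice_differentiable_on_def)
  have "(\<lambda>x. a * dz f x + b * dz g x) differentiable (at z)"
    using f g z by (simp add: twice_differentiable_on_def)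
  then show "dz (\<lambda>x. a * f x + b * g x) differentiable (at z)"
    by (rule differentiable_cong_open[OF _ S z])
       (use f g in \<open>simp add: dz_lincomb twice_differentiable_on_def\<close>)
qed

lemma Es_lincomb:
  assumes S: "open S" "z \<in> S"
    and f: "twice_differentiable_on S f" and g: "twice_differentiable_on S g"
  shows "Es k (\<lambda>x. a * f x + b * g x) z = a * Es k f z + b * Es k g z"
proof -
  have "dz (dz (\<lambda>x. a * f x + b * g x)) z = dz (\<lambda>x. a * dz f x + b * dz g x) z"
    by (rule dz_cong_open[OF S]) (use f g in \<open>simp add: dz_lincomb twice_differentiable_on_def\<close>)
  also have "\<dots> = a * dz (dz f) z + b * dz (dz g) z"
    using f g S(2) by (simp add: dz_lincomb twice_differentiable_on_def)
  finally show ?thesis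
    using f g S(2)
    by (simp add: Es_def dz_lincomb twice_differentiable_on_def algebra_simps
        del: of_real_divide of_real_diff)
qed

lemma dz_zero: "dz (\<lambda>x. 0) = (\<lambda>x. 0)"
  by (simp add: dz_def fun_eq_iff)

lemma twice_differentiable_on_zero: "twice_differentiable_on S (\<lambda>x. 0)"
  by (simp add: twice_differentiable_on_def dz_zero)

lemma Es_zero: "Es k (\<lambda>x. 0) z = 0"
  by (simp add: Es_def dz_zero)

context
  fixes S :: "real set"
  assumes S: "open S"
begin

lemma twice_differentiable_on_add:
  "twice_differentiable_on S f \<Longrightarrow> twice_differentiable_on S g \<Longrightarrow>
   twice_differentiable_on S (\<lambda>x. f x + g x)"
  using twice_differentiable_on_lincomb[OF S, of f g 1 1] by simp

lemma twice_differentiable_on_diff: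
  "twice_differentiable_on S f \<Longrightarrow> twice_differentiable_on S g \<Longrightarrow>
   twice_differentiable_on S (\<lambda>x. f x - g x)"
  using twice_differentiable_on_lincomb[OF S, of f g 1 "-1"] by simp

lemma twice_differentiable_on_cmult:
  "twice_differentiable_on S f \<Longrightarrow> twice_differentiable_on S (\<lambda>x. c * f x)"
  using twice_differentiable_on_lincomb[OF S, of f f c 0] by simp

lemma twice_differentiable_on_sum:
  "(\<And>a. a \<in> A \<Longrightarrow> twice_differentiable_on S (f a)) \<Longrightarrow>
   twice_differentiable_on S (\<lambda>x. \<Sum>a\<in>A. f a x)"
  by (induction A rule: infinite_finite_induct)
     (simp_all add: twice_differentiable_on_zero twice_differentiable_on_add)

context
  fixes z :: real
  assumes z: "z \<in> S"
begin

lemma Es_add: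
  "twice_differentiable_on S f \<Longrightarrow> twice_differentiable_on S g \<Longrightarrow>
   Es k (\<lambda>x. f x + g x) z = Es k f z + Es k g z"
  using Es_lincomb[OF S z, of f g k 1 1] by simp

lemma Es_diff:
  "twice_differentiable_on S f \<Longrightarrow> twice_differentiable_on S g \<Longrightarrow>
   Es k (\<lambda>x. f x - g x) z = Es k f z - Es k g z"
  using Es_lincomb[OF S z, of f g k 1 "-1"] by simp

lemma Es_cmult:
  "twice_differentiable_on S f \<Longrightarrow> Es k (\<lambda>x. c * f x) z = c * Es k f z"
  using Es_lincomb[OF S z, of f f k c 0] by simp

lemma Es_sum:
  "(\<And>a. a \<in> A \<Longrightarrow> twice_differentiable_on S (f a)) \<Longrightarrow>
   Es k (\<lambda>x. \<Sum>a\<in>A. f a x) z = (\<Sum>a\<in>A. Es k (f a) z)"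
proof (induction A rule: infinite_finite_induct)
  case (insert a A)
  then show ?case
    by (simp add: Es_add twice_differentiable_on_sum)
qed (simp_all add: Es_zero)

lemma Es_phibar:
  assumes "\<And>a b. twice_differentiable_on S (\<phi> a b)"
  shows "Es k (phibar k \<phi> i j) z = phibar k (\<lambda>a b. Es k (\<phi> a b)) i j z"
  unfolding phibar_def[abs_def] trace0_def[abs_def]
  by (simp only: Es_add Es_diff Es_cmult Es_sum twice_differentiable_on_add
      twice_differentiable_on_diff twice_differentiable_on_cmult twice_differentiable_on_sum assms)

end

end

definition k_contract :: "real ^ 'n \<Rightarrow> ('n \<Rightarrow> 'n \<Rightarrow> real \<Rightarrow> complex) \<Rightarrow> 'n \<Rightarrow> real \<Rightarrow> complex" where
  "k_contract k \<phi> j z = (\<Sum>m\<in>UNIV. complex_of_real (k $ m) * \<phi> m j z)"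

definition kk_contract :: "real ^ 'n \<Rightarrow> ('n \<Rightarrow> 'n \<Rightarrow> real \<Rightarrow> complex) \<Rightarrow> real \<Rightarrow> complex" where
  "kk_contract k \<phi> z =
     (\<Sum>m\<in>UNIV. \<Sum>n\<in>UNIV. complex_of_real (k $ m) * complex_of_real (k $ n) * \<phi> m n z)"

lemma ksq_nonzero:
  fixes k :: "real ^ 'n"
  assumes "k \<noteq> 0"
  shows "ksq k \<noteq> 0"
proof -
  have "ksq k = k \<bullet> k"
    by (simp add: ksq_def inner_vec_def)
  with assms show ?thesis
    by simp
qed

lemma of_real_ksq:
  "complex_of_real (ksq k) = (\<Sum>i\<in>UNIV. complex_of_real (k $ i) * complex_of_real (k $ i))"
  by (simp add: ksq_def)

lemma sum_mult_k_contract: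
  "(\<Sum>j\<in>UNIV. complex_of_real (k $ j) * k_contract k \<phi> j z) = kk_contract k \<phi> z"
  unfolding k_contract_def kk_contract_def
  by (subst sum.swap) (simp add: sum_distrib_left mult_ac)

lemma phibar_eq:
  fixes k :: "real ^ 'n"
  defines "K \<equiv> complex_of_real (ksq k)"
  shows "phibar k \<phi> i j z =
     \<phi> i j z
     - complex_of_real (k $ i) / K * k_contract k \<phi> j z
     - complex_of_real (k $ j) / K * k_contract k \<phi> i z
     + complex_of_real (k $ i) * complex_of_real (k $ j) / K\<^sup>2 * kk_contract k \<phi> z
     - ((if i = j then 1 else 0) - complex_of_real (k $ i) * complex_of_real (k $ j) / K)
         / (of_nat CARD('n) - 1) * (trace0 \<phi> z - kk_contract k \<phi> z / K)"
  unfolding phibar_def k_contract_def kk_contract_def K_def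
  by (simp add: sum_distrib_left sum_divide_distrib mult_ac of_real_diff)

lemma phibar_cong:
  "(\<And>a b. \<phi> a b z = \<psi> a b z) \<Longrightarrow> phibar k \<phi> i j z = phibar k \<psi> i j z"
  by (simp add: phibar_def trace0_def)

lemma phibar_traceless:
  fixes k :: "real ^ 'n"
  assumes "k \<noteq> 0" "CARD('n) \<ge> 2"
  shows "(\<Sum>i\<in>UNIV. phibar k \<phi> i i z) = 0"
proof -
  define kc where "kc i = complex_of_real (k $ i)" for i
  define K where "K = complex_of_real (ksq k)"
  define d where "d = (of_nat CARD('n) :: complex)"
  define A where "A j = k_contract k \<phi> j z" for j
  define B where "B = kk_contract k \<phi> z"
  define X where "X = trace0 \<phi> z - B / K"
  have "K \<noteq> 0" "d - 1 \<noteq> 0"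
    using assms ksq_nonzero by (simp_all add: K_def d_def)
  have sum_card_d: "(\<Sum>i::'n\<in>UNIV. 1) = d"
    by (simp add: d_def)
  have "(\<Sum>i\<in>UNIV. phibar k \<phi> i i z)
      = (\<Sum>i\<in>UNIV. \<phi> i i z - kc i * A i / K - kc i * A i / K
          + kc i * kc i * B / K\<^sup>2 - (1 - kc i * kc i / K) * X / (d - 1))"
    unfolding phibar_eq by (simp add: kc_def K_def d_def A_def B_def X_def)
  also have "\<dots> = trace0 \<phi> z - (\<Sum>i\<in>UNIV. kc i * A i) / K - (\<Sum>i\<in>UNIV. kc i * A i) / K
      + (\<Sum>i\<in>UNIV. kc i * kc i) * B / K\<^sup>2 - (d - (\<Sum>i\<in>UNIV. kc i * kc i) / K) * X / (d - 1)"
    unfolding trace0_def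
    by (simp only: sum.distrib sum_subtractf sum_card_d
        sum_divide_distrib[symmetric] sum_distrib_right[symmetric])
  also have "\<dots> = trace0 \<phi> z - B / K - B / K + K * B / K\<^sup>2 - (d - K / K) * X / (d - 1)"
    by (simp add: A_def B_def kc_def K_def sum_mult_k_contract flip: of_real_ksq)
  also have "\<dots> = 0"
    using \<open>K \<noteq> 0\<close> \<open>d - 1 \<noteq> 0\<close> by (simp add: X_def field_simps power2_eq_square)
  finally show ?thesis .
qed

lemma phibar_transverse:
  fixes k :: "real ^ 'n"
  assumes "k \<noteq> 0" "CARD('n) \<ge> 2"
  shows "(\<Sum>i\<in>UNIV. complex_of_real (k $ i) * phibar k \<phi> i j z) = 0"
proof -
  define kc where "kc i = complex_of_real (k $ i)" for i
  define K where "K = complex_of_real (ksq k)"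
  define d where "d = (of_nat CARD('n) :: complex)"
  define A where "A j = k_contract k \<phi> j z" for j
  define B where "B = kk_contract k \<phi> z"
  define X where "X = trace0 \<phi> z - B / K"
  have "K \<noteq> 0" "d - 1 \<noteq> 0"
    using assms ksq_nonzero by (simp_all add: K_def d_def)
  have sum_delta: "(\<Sum>i\<in>UNIV. if i = j then kc j else 0) = kc j"
    by simp
  have sum_contract: "(\<Sum>i\<in>UNIV. kc i * \<phi> i j z) = A j"
    by (simp add: A_def k_contract_def kc_def)
  have "(\<Sum>i\<in>UNIV. kc i * phibar k \<phi> i j z)
      = (\<Sum>i\<in>UNIV. kc i * \<phi> i j z - kc i * kc i * A j / K - kc j * (kc i * A i) / K
          + kc i * kc i * (kc j * B) / K\<^sup>2
          - ((if i = j then kc j else 0) - kc i * kc i * kc j / K) * X / (d - 1))"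
    unfolding phibar_eq
    by (rule sum.cong) (simp_all add: kc_def K_def d_def A_def B_def X_def algebra_simps)
  also have "\<dots> = A j - (\<Sum>i\<in>UNIV. kc i * kc i) * A j / K - kc j * (\<Sum>i\<in>UNIV. kc i * A i) / K
      + (\<Sum>i\<in>UNIV. kc i * kc i) * (kc j * B) / K\<^sup>2
      - (kc j - (\<Sum>i\<in>UNIV. kc i * kc i) * kc j / K) * X / (d - 1)"
    by (simp only: sum.distrib sum_subtractf sum_delta sum_contract sum_divide_distrib[symmetric]
        sum_distrib_right[symmetric] sum_distrib_left[symmetric])
  also have "\<dots> = A j - K * A j / K - kc j * B / K + K * (kc j * B) / K\<^sup>2 - (kc j - K * kc j / K) * X / (d - 1)"
    by (simp add: A_def B_def kc_def K_def sum_mult_k_contract flip: of_real_ksq)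
  also have "\<dots> = 0"
    using \<open>K \<noteq> 0\<close> by (simp add: field_simps power2_eq_square)
  finally show ?thesis
    by (simp add: kc_def)
qed

lemma phibar_pure_gauge_eq_0:
  fixes k :: "real ^ 'n"
  assumes "k \<noteq> 0"
  shows "phibar k (\<lambda>a b w. complex_of_real (k $ a) * v b w + v a w * complex_of_real (k $ b)) i j z = 0"
    (is "phibar k ?\<psi> i j z = 0")
proof -
  define kc where "kc i = complex_of_real (k $ i)" for i
  define K where "K = complex_of_real (ksq k)"
  define V where "V = (\<Sum>m\<in>UNIV. kc m * v m z)"
  have "K \<noteq> 0"
    using assms ksq_nonzero by (simp add: K_def)
  have contract: "k_contract k ?\<psi> j z = K * v j z + V * kc j" for j
    unfolding k_contract_def K_def V_def of_real_ksq kc_def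
    by (simp add: sum.distrib distrib_left sum_distrib_left mult_ac)
  have "kk_contract k ?\<psi> z = (\<Sum>n\<in>UNIV. kc n * (K * v n z + V * kc n))"
    unfolding sum_mult_k_contract[symmetric] contract kc_def ..
  also have "\<dots> = K * (\<Sum>n\<in>UNIV. kc n * v n z) + V * (\<Sum>n\<in>UNIV. kc n * kc n)"
    by (simp add: distrib_left sum.distrib sum_distrib_left mult_ac)
  also have "\<dots> = 2 * K * V"
    by (simp add: K_def kc_def of_real_ksq flip: V_def kc_def)
  finally have double_contract: "kk_contract k ?\<psi> z = 2 * K * V" .
  have trace: "trace0 ?\<psi> z = 2 * V"
    by (simp add: trace0_def V_def kc_def sum.distrib sum_distrib_left mult_ac)
  show ?thesis
    using \<open>K \<noteq> 0\<close> unfolding phibar_eq contract double_contract trace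
    by (simp add: kc_def K_def field_simps power2_eq_square)
qed

theorem lemma1:
  fixes k :: "real ^ 'n" and \<phi> :: "'n \<Rightarrow> 'n \<Rightarrow> real \<Rightarrow> complex"
  assumes d2: "CARD('n) \<ge> 2"
    and knz: "k \<noteq> 0"
    and sym: "\<And>i j z. z > 0 \<Longrightarrow> \<phi> i j z = \<phi> j i z"
    and diff1: "\<And>i j z. z > 0 \<Longrightarrow> \<phi> i j differentiable (at z)"
    and diff2: "\<And>i j z. z > 0 \<Longrightarrow> dz (\<phi> i j) differentiable (at z)"
    and eq: "\<And>i j z. z > 0 \<Longrightarrow>
       Es k (\<phi> i j) z =
         - (\<Sum>m\<in>UNIV. complex_of_real (k $ j * k $ m) * \<phi> i m z)
         - (\<Sum>m\<in>UNIV. complex_of_real (k $ i * k $ m) * \<phi> m j z)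
         + complex_of_real (k $ i * k $ j) * trace0 \<phi> z"
  shows "(\<forall>z>0. (\<Sum>i\<in>UNIV. phibar k \<phi> i i z) = 0)
       \<and> (\<forall>j z. z > 0 \<longrightarrow> (\<Sum>i\<in>UNIV. complex_of_real (k $ i) * phibar k \<phi> i j z) = 0)
       \<and> (\<forall>i j z. z > 0 \<longrightarrow> Es k (phibar k \<phi> i j) z = 0)"
proof (intro conjI allI impI)
  fix z :: real
  show "(\<Sum>i\<in>UNIV. phibar k \<phi> i i z) = 0"
    using knz d2 by (rule phibar_traceless)
next
  fix j and z :: real
  show "(\<Sum>i\<in>UNIV. complex_of_real (k $ i) * phibar k \<phi> i j z) = 0"
    using knz d2 by (rule phibar_transverse)
next
  fix i j and z :: real
  assume z: "z > 0"
  define v where "v b w = complex_of_real (k $ b) * trace0 \<phi> w / 2 - k_contract k \<phi> b w" for b w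
  have "twice_differentiable_on {0<..} (\<phi> a b)" for a b
    using diff1 diff2 by (simp add: twice_differentiable_on_def)
  then have "Es k (phibar k \<phi> i j) z = phibar k (\<lambda>a b. Es k (\<phi> a b)) i j z"
    using z by (intro Es_phibar[where S = "{0<..}"]) simp_all
  also have "\<dots> = phibar k (\<lambda>a b w. complex_of_real (k $ a) * v b w + v a w * complex_of_real (k $ b)) i j z"
  proof (rule phibar_cong)
    fix a b
    show "Es k (\<phi> a b) z = complex_of_real (k $ a) * v b z + v a z * complex_of_real (k $ b)"
      unfolding eq[OF z] v_def k_contract_def using sym[OF z]
      by (simp add: sum_distrib_left algebra_simps)
  qed
  also have "\<dots> = 0"
    using knz by (rule phibar_pure_gauge_eq_0)
  finally show "Es k (phibar k \<phi> i j) z = 0" .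
qed

end
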